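(* For every integer $n\ge 1$, the number of Dumont permutations of the second kind of length $2n$ that avoid the pattern $231$ is $2^{n-1}$, i.e. $|\mathfrak D^2_{2n}(231)|=2^{n-1}$.
   Context: A Dumont permutation of the second kind of length $2n$ is a permutation $\pi\in\mathfrak S_{2n}$ such that for every $i=1,\dots,n$ one has $\pi(2i)<2i$ and $\pi(2i-1)\ge 2i-1$ (entries at even positions are deficiencies, entries at odd positions are fixed points or excedances). $\mathfrak D^2_{2n}$ denotes the set of these. A permutation $\sigma$ contains a pattern $\tau\in\mathfrak S_k$ if some subsequence $(\sigma(i_1),\dots,\sigma(i_k))$, $i_1<\dots<i_k$, is order-isomorphic to $\tau$; otherwise $\sigma$ avoids $\tau$. $\mathfrak D^2_{2n}(T)$ denotes the set of permutations in $\mathfrak D^2_{2n}$ avoiding every pattern in $T$. *)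

theory Defs
  imports "HOL-Combinatorics.Permutations"
begin

text \<open>Permutations of length m are bijections \<open>\<sigma>\<close> with \<open>\<sigma> permutes {1..m}\<close>
  (positions and values both in 1..m). A pattern \<open>\<tau>\<close> of length k is likewise
  a permutation of {1..k}.\<close>

definition contains_pattern :: "(nat \<Rightarrow> nat) \<Rightarrow> nat \<Rightarrow> (nat \<Rightarrow> nat) \<Rightarrow> nat \<Rightarrow> bool" where
  "contains_pattern \<sigma> m \<tau> k \<longleftrightarrow>
     (\<exists>ix :: nat \<Rightarrow> nat. strict_mono_on {1..k} ix \<and> ix ` {1..k} \<subseteq> {1..m} \<and>
        (\<forall>a\<in>{1..k}. \<forall>b\<in>{1..k}. \<sigma> (ix a) < \<sigma> (ix b) \<longleftrightarrow> \<tau> a < \<tau> b))"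

definition avoids_pattern :: "(nat \<Rightarrow> nat) \<Rightarrow> nat \<Rightarrow> (nat \<Rightarrow> nat) \<Rightarrow> nat \<Rightarrow> bool" where
  "avoids_pattern \<sigma> m \<tau> k \<longleftrightarrow> \<not> contains_pattern \<sigma> m \<tau> k"

definition dumont2 :: "nat \<Rightarrow> (nat \<Rightarrow> nat) set" where
  "dumont2 n = {\<pi>. \<pi> permutes {1..2*n} \<and>
     (\<forall>i\<in>{1..n}. \<pi> (2*i) < 2*i \<and> \<pi> (2*i - 1) \<ge> 2*i - 1)}"

definition pat231 :: "nat \<Rightarrow> nat" where
  "pat231 = (\<lambda>x. if x = 1 then 2 else if x = 2 then 3 else if x = 3 then 1 else x)"

end

theory Submission
  imports Defs
begin

text \<open>In a Dumont permutation \<open>\<pi>\<close> of the second kind of length \<open>2n+2\<close> the last two positions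
  form a descent, since \<open>\<pi>(2n+1) \<ge> 2n+1 > \<pi>(2n+2)\<close>. If \<open>\<pi>\<close> avoids 231, the values of this
  descent must be consecutive, \<open>a+1, a\<close>: otherwise the value \<open>\<pi>(2n+1) - 1\<close> occurs further left and
  completes a 231. Hence \<open>a \<in> {2n, 2n+1}\<close>, and composing with the transposition \<open>(a 2n+2)\<close> turns
  \<open>\<pi>\<close> into a 231-avoiding Dumont permutation of length \<open>2n\<close>; this transposition is order
  preserving on \<open>{1..2n}\<close>, so conversely each such permutation extends in exactly these two ways
  (only \<open>a = 1\<close> when \<open>n = 0\<close>). So the count doubles from \<open>n = 1\<close> on.\<close>

definition avoids_231 :: "(nat \<Rightarrow> nat) \<Rightarrow> nat \<Rightarrow> bool" where
  "avoids_231 \<pi> m \<longleftrightarrow>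
     (\<forall>i j k. 1 \<le> i \<longrightarrow> i < j \<longrightarrow> j < k \<longrightarrow> k \<le> m \<longrightarrow> \<not> (\<pi> k < \<pi> i \<and> \<pi> i < \<pi> j))"

lemma avoids_231D:
  "avoids_231 \<pi> m \<Longrightarrow> 1 \<le> i \<Longrightarrow> i < j \<Longrightarrow> j < k \<Longrightarrow> k \<le> m \<Longrightarrow> \<pi> k < \<pi> i \<Longrightarrow> \<pi> i < \<pi> j
    \<Longrightarrow> False"
  unfolding avoids_231_def by blast

lemma avoids_pattern_pat231_iff: "avoids_pattern \<pi> m pat231 3 \<longleftrightarrow> avoids_231 \<pi> m"
proof
  assume avoids: "avoids_pattern \<pi> m pat231 3"
  show "avoids_231 \<pi> m" unfolding avoids_231_def
  proof (intro allI impI notI)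
    fix i j k assume ijk: "1 \<le> i" "i < j" "j < k" "k \<le> m" "\<pi> k < \<pi> i \<and> \<pi> i < \<pi> j"
    define ix where "ix = (\<lambda>a::nat. if a = 1 then i else if a = 2 then j else k)"
    have three: "a \<in> {1..3} \<longleftrightarrow> a = 1 \<or> a = 2 \<or> a = 3" for a :: nat by auto
    have "strict_mono_on {1..3} ix" "ix ` {1..3} \<subseteq> {1..m}"
      "\<forall>a\<in>{1..3}. \<forall>b\<in>{1..3}. \<pi> (ix a) < \<pi> (ix b) \<longleftrightarrow> pat231 a < pat231 b"
      unfolding strict_mono_on_def three ix_def pat231_def using ijk by auto
    then have "contains_pattern \<pi> m pat231 3" unfolding contains_pattern_def by blast
    with avoids show False unfolding avoids_pattern_def by blast
  qed
next
  assume avoids: "avoids_231 \<pi> m"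
  show "avoids_pattern \<pi> m pat231 3" unfolding avoids_pattern_def contains_pattern_def
  proof
    assume "\<exists>ix. strict_mono_on {1..3} ix \<and> ix ` {1..3} \<subseteq> {1..m} \<and>
        (\<forall>a\<in>{1..3}. \<forall>b\<in>{1..3}. \<pi> (ix a) < \<pi> (ix b) \<longleftrightarrow> pat231 a < pat231 b)"
    then obtain ix where mono: "strict_mono_on {1..3} ix" and range: "ix ` {1..3} \<subseteq> {1..m}"
      and order: "\<forall>a\<in>{1..3}. \<forall>b\<in>{1..3}. \<pi> (ix a) < \<pi> (ix b) \<longleftrightarrow> pat231 a < pat231 b"
      by blast
    have "ix 1 < ix 2" "ix 2 < ix 3" using mono unfolding strict_mono_on_def by auto
    moreover have "ix 1 \<in> {1..m}" "ix 3 \<in> {1..m}" using range by (simp_all add: image_subset_iff)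
    moreover have "\<pi> (ix 3) < \<pi> (ix 1)" "\<pi> (ix 1) < \<pi> (ix 2)"
      using order by (auto simp: pat231_def)
    ultimately show False using avoids_231D[OF avoids] by simp
  qed
qed

lemma avoids_231_mono: "avoids_231 \<pi> m' \<Longrightarrow> m \<le> m' \<Longrightarrow> avoids_231 \<pi> m"
  unfolding avoids_231_def by (meson le_trans)

lemma avoids_231_comp_strict_mono:
  assumes "strict_mono_on (\<pi> ` {1..m}) f"
  shows "avoids_231 (f \<circ> \<pi>) m \<longleftrightarrow> avoids_231 \<pi> m"
proof -
  have "f (\<pi> a) < f (\<pi> b) \<longleftrightarrow> \<pi> a < \<pi> b" if "a \<in> {1..m}" "b \<in> {1..m}" for a b
    using strict_mono_on_less[OF assms] that by blast
  moreover have "i \<in> {1..m}" "j \<in> {1..m}" "k \<in> {1..m}"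
    if "1 \<le> i" "i < j" "j < k" "k \<le> m" for i j k :: nat
    using that by auto
  ultimately show ?thesis unfolding avoids_231_def comp_def by meson
qed

lemma avoids_231_last_descent:
  assumes perm: "\<pi> permutes {1..m+2}" and avoids: "avoids_231 \<pi> (m+2)"
    and descent: "\<pi> (m+2) < \<pi> (m+1)"
  shows "\<pi> (m+1) = \<pi> (m+2) + 1"
proof (rule ccontr)
  assume "\<pi> (m+1) \<noteq> \<pi> (m+2) + 1"
  with descent have gap: "\<pi> (m+2) < \<pi> (m+1) - 1" by simp
  have "\<pi> (m+1) \<le> m+2" using permutes_image[OF perm] by auto
  with gap have "\<pi> (m+1) - 1 \<in> \<pi> ` {1..m+2}" using permutes_image[OF perm] by auto
  then obtain q where q: "q \<in> {1..m+2}" "\<pi> q = \<pi> (m+1) - 1" by (rule imageE) simp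
  with gap have "q < m+1" by (cases "q = m+1 \<or> q = m+2") auto
  moreover have "\<pi> q < \<pi> (m+1)" using q(2) gap by linarith
  ultimately show False using q gap avoids_231D[OF avoids, of q "m+1" "m+2"] by simp
qed

lemma avoids_231_last_two_iff:
  assumes perm: "\<pi> permutes {1..m+2}"
    and last_entries: "\<pi> (m+1) = \<pi> (m+2) + 1" "m \<le> \<pi> (m+2)"
  shows "avoids_231 \<pi> (m+2) \<longleftrightarrow> avoids_231 \<pi> m"
proof
  show "avoids_231 \<pi> (m+2) \<Longrightarrow> avoids_231 \<pi> m" by (erule avoids_231_mono) simp
next
  assume avoids: "avoids_231 \<pi> m"
  show "avoids_231 \<pi> (m+2)" unfolding avoids_231_def
  proof (intro allI impI notI)
    fix i j k assume ijk: "1 \<le> i" "i < j" "j < k" "k \<le> m+2"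
      and pattern: "\<pi> k < \<pi> i \<and> \<pi> i < \<pi> j"
    show False
    proof (cases "k \<le> m")
      case True
      with ijk pattern show False using avoids_231D[OF avoids] by blast
    next
      case False
      with ijk have "k = m+1 \<or> k = m+2" by auto
      with last_entries have "m \<le> \<pi> k" by auto
      moreover have "\<pi> j \<le> m+2" using permutes_image[OF perm] ijk by auto
      ultimately have "\<pi> k = m" "\<pi> i = m+1" using pattern by auto
      with last_entries \<open>k = m+1 \<or> k = m+2\<close> have "k = m+2" "\<pi> i = \<pi> (m+1)" by auto
      then have "i = m+1" using permutes_inj[OF perm] by (simp add: inj_eq)
      with ijk \<open>k = m+2\<close> show False by simp
    qed
  qed
qed

lemma strict_mono_on_transpose: "(a::nat) < b \<Longrightarrow> strict_mono_on {..a} (transpose a b)"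
  unfolding strict_mono_on_def by (auto simp: transpose_def)

lemma transpose_less_iff: "(x::nat) \<le> a \<Longrightarrow> x \<le> b \<Longrightarrow> transpose a b v < x \<longleftrightarrow> v < x"
  by (auto simp: transpose_def)

lemma dumont2_Suc_iff:
  "\<pi> \<in> dumont2 (Suc n) \<longleftrightarrow>
     \<pi> permutes {1..2*n+2} \<and> (\<forall>i\<in>{1..n}. \<pi> (2*i) < 2*i \<and> \<pi> (2*i - 1) \<ge> 2*i - 1) \<and>
     \<pi> (2*n+2) < 2*n+2 \<and> \<pi> (2*n+1) \<ge> 2*n+1"
  unfolding dumont2_def by (auto simp: atLeastAtMostSuc_conv)

lemma transpose_comp_dumont2_Suc_iff:
  assumes a: "2*n \<le> a" "a \<le> 2*n+1" "0 < a"
    and fixes_top: "\<sigma> (2*n+1) = 2*n+1" "\<sigma> (2*n+2) = 2*n+2"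
  shows "transpose a (2*n+2) \<circ> \<sigma> \<in> dumont2 (Suc n) \<longleftrightarrow> \<sigma> \<in> dumont2 n"
proof -
  let ?\<tau> = "transpose a (2*n+2)"
  have \<tau>_permutes: "?\<tau> permutes {1..2*n+2}" using a by (intro permutes_swap_id) auto
  have permutes_iff: "?\<tau> \<circ> \<sigma> permutes {1..2*n+2} \<longleftrightarrow> \<sigma> permutes {1..2*n}"
  proof
    assume "?\<tau> \<circ> \<sigma> permutes {1..2*n+2}"
    from permutes_compose[OF this \<tau>_permutes] have "\<sigma> permutes {1..2*n+2}"
      by (simp add: comp_assoc[symmetric])
    then show "\<sigma> permutes {1..2*n}"
      by (rule permutes_superset) (use fixes_top in \<open>auto simp: le_Suc_eq\<close>)
  next
    assume "\<sigma> permutes {1..2*n}"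
    then have "\<sigma> permutes {1..2*n+2}" by (rule permutes_subset) auto
    then show "?\<tau> \<circ> \<sigma> permutes {1..2*n+2}" using \<tau>_permutes by (rule permutes_compose)
  qed
  have lower: "(?\<tau> \<circ> \<sigma>) (2*i) < 2*i \<longleftrightarrow> \<sigma> (2*i) < 2*i"
    "(?\<tau> \<circ> \<sigma>) (2*i - 1) \<ge> 2*i - 1 \<longleftrightarrow> \<sigma> (2*i - 1) \<ge> 2*i - 1" if "i \<in> {1..n}" for i
    using that a transpose_less_iff[of "2*i" a "2*n+2"] transpose_less_iff[of "2*i - 1" a "2*n+2"]
    by (auto simp: not_less[symmetric])
  have top: "(?\<tau> \<circ> \<sigma>) (2*n+2) < 2*n+2" "(?\<tau> \<circ> \<sigma>) (2*n+1) \<ge> 2*n+1"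
    using a fixes_top by (auto simp: transpose_def)
  show ?thesis unfolding dumont2_Suc_iff using permutes_iff lower top by (auto simp: dumont2_def)
qed

definition dumont2_231 :: "nat \<Rightarrow> (nat \<Rightarrow> nat) set" where
  "dumont2_231 n = {\<pi> \<in> dumont2 n. avoids_231 \<pi> (2*n)}"

lemma transpose_comp_dumont2_231_Suc_iff:
  assumes a: "2*n \<le> a" "a \<le> 2*n+1" "0 < a"
    and fixes_top: "\<sigma> (2*n+1) = 2*n+1" "\<sigma> (2*n+2) = 2*n+2"
  shows "transpose a (2*n+2) \<circ> \<sigma> \<in> dumont2_231 (Suc n) \<longleftrightarrow> \<sigma> \<in> dumont2_231 n"
proof -
  let ?\<tau> = "transpose a (2*n+2)"
  have "avoids_231 (?\<tau> \<circ> \<sigma>) (2*n+2) \<longleftrightarrow> avoids_231 \<sigma> (2*n)" if \<sigma>: "\<sigma> \<in> dumont2 n"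
  proof -
    have "?\<tau> \<circ> \<sigma> permutes {1..2*n+2}"
      using \<sigma> transpose_comp_dumont2_Suc_iff[OF assms] by (simp add: dumont2_Suc_iff)
    moreover have "(?\<tau> \<circ> \<sigma>) (2*n+1) = (?\<tau> \<circ> \<sigma>) (2*n+2) + 1" "2*n \<le> (?\<tau> \<circ> \<sigma>) (2*n+2)"
      using a fixes_top by (auto simp: transpose_def)
    ultimately have "avoids_231 (?\<tau> \<circ> \<sigma>) (2*n+2) \<longleftrightarrow> avoids_231 (?\<tau> \<circ> \<sigma>) (2*n)"
      by (rule avoids_231_last_two_iff)
    also have "\<dots> \<longleftrightarrow> avoids_231 \<sigma> (2*n)"
    proof (rule avoids_231_comp_strict_mono)
      have "\<sigma> ` {1..2*n} \<subseteq> {..a}"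
        using \<sigma> a permutes_image[of \<sigma> "{1..2*n}"] by (auto simp: dumont2_def)
      moreover have "strict_mono_on {..a} ?\<tau>" using a by (intro strict_mono_on_transpose) simp
      ultimately show "strict_mono_on (\<sigma> ` {1..2*n}) ?\<tau>" by (metis monotone_on_subset)
    qed
    finally show ?thesis .
  qed
  then show ?thesis
    using transpose_comp_dumont2_Suc_iff[OF assms] unfolding dumont2_231_def by auto
qed

lemma dumont2_231_Suc_last_entries:
  assumes "\<pi> \<in> dumont2_231 (Suc n)"
  shows "\<pi> (2*n+2) \<in> {max 1 (2*n)..2*n+1}" "\<pi> (2*n+1) = \<pi> (2*n+2) + 1"
proof -
  have perm: "\<pi> permutes {1..2*n+2}" and avoids: "avoids_231 \<pi> (2*n+2)"
    and "\<pi> (2*n+2) < 2*n+2" "2*n+1 \<le> \<pi> (2*n+1)"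
    using assms by (auto simp: dumont2_231_def dumont2_Suc_iff)
  moreover have "\<pi> (2*n+2) \<noteq> \<pi> (2*n+1)" using permutes_inj[OF perm] by (simp add: inj_eq)
  ultimately have descent: "\<pi> (2*n+2) < \<pi> (2*n+1)" by linarith
  show consecutive: "\<pi> (2*n+1) = \<pi> (2*n+2) + 1"
    using avoids_231_last_descent[OF perm avoids descent] .
  have "\<pi> (2*n+2) \<ge> 1" using permutes_image[OF perm] by auto
  with consecutive descent assms show "\<pi> (2*n+2) \<in> {max 1 (2*n)..2*n+1}"
    by (auto simp: dumont2_231_def dumont2_Suc_iff)
qed

text \<open>The lower bound \<open>max 1 (2*n)\<close> excludes the value \<open>a = 0\<close> when \<open>n = 0\<close>.\<close>

lemma dumont2_231_Suc:
  "dumont2_231 (Suc n) = (\<Union>a\<in>{max 1 (2*n)..2*n+1}. (\<circ>) (transpose a (2*n+2)) ` dumont2_231 n)"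
proof (intro equalityI subsetI)
  fix \<pi> assume \<pi>: "\<pi> \<in> dumont2_231 (Suc n)"
  define a where "a = \<pi> (2*n+2)"
  define \<sigma> where "\<sigma> = transpose a (2*n+2) \<circ> \<pi>"
  have a_range: "a \<in> {max 1 (2*n)..2*n+1}" and "\<pi> (2*n+1) = a + 1"
    using dumont2_231_Suc_last_entries[OF \<pi>] by (simp_all add: a_def)
  then have "\<sigma> (2*n+1) = 2*n+1" "\<sigma> (2*n+2) = 2*n+2"
    by (auto simp: \<sigma>_def a_def transpose_def)
  moreover have \<pi>_eq: "\<pi> = transpose a (2*n+2) \<circ> \<sigma>"
    by (simp add: \<sigma>_def comp_assoc[symmetric])
  ultimately have "\<sigma> \<in> dumont2_231 n"
    using \<pi> a_range transpose_comp_dumont2_231_Suc_iff[of n a \<sigma>] by auto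
  with a_range \<pi>_eq show "\<pi> \<in> (\<Union>a\<in>{max 1 (2*n)..2*n+1}. (\<circ>) (transpose a (2*n+2)) ` dumont2_231 n)"
    by blast
next
  fix \<pi> assume "\<pi> \<in> (\<Union>a\<in>{max 1 (2*n)..2*n+1}. (\<circ>) (transpose a (2*n+2)) ` dumont2_231 n)"
  then obtain a \<sigma> where a: "a \<in> {max 1 (2*n)..2*n+1}" and \<sigma>: "\<sigma> \<in> dumont2_231 n"
    and \<pi>_eq: "\<pi> = transpose a (2*n+2) \<circ> \<sigma>" by blast
  have "\<sigma> (2*n+1) = 2*n+1" "\<sigma> (2*n+2) = 2*n+2"
    using \<sigma> by (auto simp: dumont2_231_def dumont2_def permutes_not_in)
  with a \<sigma> show "\<pi> \<in> dumont2_231 (Suc n)"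
    unfolding \<pi>_eq by (subst transpose_comp_dumont2_231_Suc_iff) auto
qed

lemma finite_dumont2_231: "finite (dumont2_231 n)"
  by (rule finite_subset[OF _ finite_permutations[of "{1..2*n}"]])
    (auto simp: dumont2_231_def dumont2_def)

lemma card_dumont2_231_Suc:
  "card (dumont2_231 (Suc n)) = (if n = 0 then 1 else 2) * card (dumont2_231 n)"
proof -
  let ?A = "{max 1 (2*n)..2*n+1}"
  let ?image = "\<lambda>a. (\<circ>) (transpose a (2*n+2)) ` dumont2_231 n"
  have fixes_top: "\<sigma> (2*n+2) = 2*n+2" if "\<sigma> \<in> dumont2_231 n" for \<sigma>
    using that by (auto simp: dumont2_231_def dumont2_def permutes_not_in)
  have top_value: "\<pi> (2*n+2) = a" if "\<pi> \<in> ?image a" for \<pi> a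
  proof -
    from that obtain \<sigma> where \<sigma>: "\<sigma> \<in> dumont2_231 n" and "\<pi> = transpose a (2*n+2) \<circ> \<sigma>"
      by blast
    then show ?thesis using fixes_top[OF \<sigma>] by simp
  qed
  have disjoint: "?image a \<inter> ?image b = {}" if "a \<noteq> b" for a b
    using that top_value by (metis disjoint_iff)
  have card_image: "card (?image a) = card (dumont2_231 n)" for a
    by (rule card_image, rule inj_on_inverseI[where g = "(\<circ>) (transpose a (2*n+2))"])
      (simp add: comp_assoc[symmetric])
  have "card (dumont2_231 (Suc n)) = (\<Sum>a\<in>?A. card (?image a))"
    unfolding dumont2_231_Suc by (rule card_UN_disjoint) (use finite_dumont2_231 disjoint in auto)
  also have "\<dots> = card ?A * card (dumont2_231 n)"
    using card_image by simp
  also have "card ?A = (if n = 0 then 1 else 2)"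
    by auto
  finally show ?thesis .
qed

lemma dumont2_231_0: "dumont2_231 0 = {id}"
  by (auto simp: dumont2_231_def dumont2_def avoids_231_def)

theorem theorem2p2:
  fixes n :: nat
  assumes "n \<ge> 1"
  shows "card {\<pi> \<in> dumont2 n. avoids_pattern \<pi> (2*n) pat231 3} = 2 ^ (n - 1)"
proof -
  have card_Suc: "card (dumont2_231 (Suc k)) = 2 ^ k" for k
    by (induction k) (simp_all add: card_dumont2_231_Suc dumont2_231_0)
  have "{\<pi> \<in> dumont2 n. avoids_pattern \<pi> (2*n) pat231 3} = dumont2_231 (Suc (n - 1))"
    using assms by (simp add: dumont2_231_def avoids_pattern_pat231_iff)
  then show ?thesis by (simp add: card_Suc)
qed

end
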